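(* Let $\Phi\in\mathcal{C}^2(\mathbb{R}^d)$, let $x_0,x_1\in\mathbb{R}^d$ and $R:=\max\{|x_0|,|x_1|\}>0$. Let $C:=\sup_{|x|\le 9R}|D^2\Phi(x)|$ and $C_{\rho}:=\max_{|x|\le\rho}|\nabla\Phi(x)|$. Let $t_1>0$ satisfy \[Ct_1^2e^{Ct_1^2}\le\tfrac14,\qquad t_1\le\frac{\sqrt R}{\sqrt{2C_{2R}}},\qquad t_1\le\frac{2\sqrt R}{\sqrt{C_{9R}}}\] (a bound with zero denominator being void). Then for every $0<t\le t_1$ there exists $v_0\in\mathbb{R}^d$ with $|v_0|\le4R$ such that $X_t(x_0,v_0/t)=x_1$.
   Context: $(X_t(x,v),V_t(x,v))$ denotes the solution at time $t$ of the ODE system $\dot x=v$, $\dot v=-\nabla\Phi(x)$ with initial data $(x,v)$; $D^2\Phi$ is the Hessian of $\Phi$ and $|\cdot|$ its operator norm. *)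

theory Defs
  imports "HOL-Analysis.Analysis"
begin

definition C2_with :: "('a::euclidean_space \<Rightarrow> real) \<Rightarrow> ('a \<Rightarrow> 'a) \<Rightarrow> ('a \<Rightarrow> 'a \<Rightarrow>\<^sub>L 'a) \<Rightarrow> bool" where
  "C2_with Phi grad hess \<longleftrightarrow>
     (\<forall>x. (Phi has_derivative (\<lambda>h. grad x \<bullet> h)) (at x)) \<and>
     (\<forall>x. (grad has_derivative blinfun_apply (hess x)) (at x)) \<and>
     continuous_on UNIV hess"

definition newton_solution :: "('a::euclidean_space \<Rightarrow> 'a) \<Rightarrow> real \<Rightarrow> 'a \<Rightarrow> 'a \<Rightarrow> (real \<Rightarrow> 'a) \<Rightarrow> (real \<Rightarrow> 'a) \<Rightarrow> bool" where
  "newton_solution grad t x v X V \<longleftrightarrow>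
     X 0 = x \<and> V 0 = v \<and>
     (\<forall>s\<in>{0..t}. (X has_vector_derivative V s) (at s within {0..t}) \<and>
                  (V has_vector_derivative - grad (X s)) (at s within {0..t}))"

end

theory Submission imports Defs begin

text \<open>
  Replace \<open>\<nabla>\<Phi>\<close> by \<open>\<psi> = \<nabla>\<Phi> \<circ> P\<close>, where \<open>P\<close> is the nearest-point projection onto the ball
  \<open>K\<close> of radius \<open>9R\<close>; \<open>\<psi>\<close> is globally \<open>C\<close>-Lipschitz and bounded by \<open>C\<^sub>9\<^sub>R\<close>.
  A solution of \<open>X'' = -\<psi>(X)\<close> with \<open>X 0 = x\<^sub>0\<close>, \<open>X t = x\<^sub>1\<close> is a fixed point of
  \<open>X \<mapsto> x\<^sub>0 + (s/t)(x\<^sub>1 - x\<^sub>0 + D X t) - D X s\<close>, where \<open>D X s = \<integral>\<^sub>0\<^sup>s (s - r) \<psi>(X r) dr\<close>.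
  Since \<open>|D X s - D Y s| \<le> C s\<^sup>2 \<parallel>X - Y\<parallel>\<^sub>\<infinity> / 2\<close>, this map is a contraction once
  \<open>C t\<^sup>2 < 1\<close>. The bound \<open>|D X s| \<le> C\<^sub>9\<^sub>R t\<^sup>2/2 \<le> 2R\<close> keeps the fixed point inside \<open>K\<close>, where
  \<open>\<psi> = \<nabla>\<Phi>\<close>, and gives \<open>|t X'(0)| \<le> 4R\<close>.
\<close>

definition duhamel_term :: "('a::real_normed_vector \<Rightarrow> 'a) \<Rightarrow> (real \<Rightarrow> 'a) \<Rightarrow> real \<Rightarrow> 'a" where
  "duhamel_term F X s = integral {0..s} (\<lambda>r. (s - r) *\<^sub>R F (X r))"

lemma integral_tent_weight:
  fixes s :: real assumes "0 \<le> s"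
  shows "integral {0..s} (\<lambda>r. s - r) = s\<^sup>2 / 2"
proof -
  have "((\<lambda>r. s - r) has_integral (s * s - s\<^sup>2 / 2) - (s * 0 - 0\<^sup>2 / 2)) {0..s}"
    by (rule fundamental_theorem_of_calculus[OF assms])
       (auto intro!: derivative_eq_intros simp: has_real_derivative_iff_has_vector_derivative[symmetric])
  then show ?thesis by (simp add: integral_unique power2_eq_square)
qed

lemma norm_integral_tent_le:
  fixes f :: "real \<Rightarrow> 'a::banach"
  assumes "0 \<le> s" "continuous_on {0..s} f" "\<And>r. r \<in> {0..s} \<Longrightarrow> norm (f r) \<le> B"
  shows "norm (integral {0..s} (\<lambda>r. (s - r) *\<^sub>R f r)) \<le> B * s\<^sup>2 / 2"
proof -
  have "norm (integral {0..s} (\<lambda>r. (s - r) *\<^sub>R f r)) \<le> integral {0..s} (\<lambda>r. (s - r) * B)"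
  proof (rule integral_norm_bound_integral)
    show "(\<lambda>r. (s - r) *\<^sub>R f r) integrable_on {0..s}"
      by (intro integrable_continuous_real continuous_intros assms)
    show "(\<lambda>r. (s - r) * B) integrable_on {0..s}"
      by (intro integrable_continuous_real continuous_intros)
  qed (use assms(3) in \<open>auto intro!: mult_left_mono\<close>)
  also have "\<dots> = B * s\<^sup>2 / 2"
    using integral_tent_weight[OF assms(1)] by (simp add: mult.commute)
  finally show ?thesis .
qed

lemma tent_integral_has_vector_derivative:
  fixes f :: "real \<Rightarrow> 'a::banach"
  assumes "continuous_on {0..t} f" "s \<in> {0..t}"
  shows "((\<lambda>s. integral {0..s} (\<lambda>r. (s - r) *\<^sub>R f r)) has_vector_derivative integral {0..s} f)
           (at s within {0..t})"
proof -
  have split: "integral {0..s} (\<lambda>r. (s - r) *\<^sub>R f r)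
                 = s *\<^sub>R integral {0..s} f - integral {0..s} (\<lambda>r. r *\<^sub>R f r)" if "s \<in> {0..t}" for s
  proof -
    have "f integrable_on {0..s}" "(\<lambda>r. r *\<^sub>R f r) integrable_on {0..s}"
      using that by (auto intro!: integrable_continuous_real continuous_intros
                          intro: continuous_on_subset[OF assms(1)])
    then show ?thesis
      unfolding scaleR_diff_left by (subst integral_diff) (auto intro: integrable_cmul)
  qed
  have "((\<lambda>s. s *\<^sub>R integral {0..s} f - integral {0..s} (\<lambda>r. r *\<^sub>R f r)) has_vector_derivative
          (s *\<^sub>R f s + 1 *\<^sub>R integral {0..s} f) - s *\<^sub>R f s) (at s within {0..t})"
    by (intro derivative_intros integral_has_vector_derivative assms continuous_intros)
  then show ?thesis
    by (intro has_vector_derivative_transform[OF assms(2) split]) simp_all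
qed

lemma newton_solution_cong:
  assumes "\<And>s. s \<in> {0..t} \<Longrightarrow> F (X s) = G (X s)"
  shows "newton_solution F t x v X V \<longleftrightarrow> newton_solution G t x v X V"
  using assms by (simp add: newton_solution_def)

lemma newton_solution_of_integral_equation:
  fixes F :: "'a::euclidean_space \<Rightarrow> 'a"
  assumes "0 \<le> t" "continuous_on {0..t} (\<lambda>s. F (X s))"
    and eq: "\<And>s. s \<in> {0..t} \<Longrightarrow> X s = x + s *\<^sub>R v - duhamel_term F X s"
  shows "newton_solution F t x v X (\<lambda>s. v - integral {0..s} (\<lambda>r. F (X r)))"
  unfolding newton_solution_def
proof (intro conjI ballI)
  show "X 0 = x" using eq[of 0] assms(1) by (simp add: duhamel_term_def)
  show "v - integral {0..0} (\<lambda>r. F (X r)) = v" by simp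
  fix s assume s: "s \<in> {0..t}"
  have deriv: "((\<lambda>s. x + s *\<^sub>R v - duhamel_term F X s) has_vector_derivative
          v - integral {0..s} (\<lambda>r. F (X r))) (at s within {0..t})"
    unfolding duhamel_term_def
    using tent_integral_has_vector_derivative[OF assms(2) s] by (auto intro!: derivative_eq_intros)
  show "(X has_vector_derivative v - integral {0..s} (\<lambda>r. F (X r))) (at s within {0..t})"
    by (rule has_vector_derivative_transform[OF s _ deriv]) (rule eq)
  show "((\<lambda>s. v - integral {0..s} (\<lambda>r. F (X r))) has_vector_derivative - F (X s)) (at s within {0..t})"
    using integral_has_vector_derivative[OF assms(2) s] by (auto intro!: derivative_eq_intros)
qed

lemma continuous_on_duhamel_term:
  fixes F :: "'a::banach \<Rightarrow> 'a"
  assumes "continuous_on {0..t} (\<lambda>r. F (X r))"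
  shows "continuous_on {0..t} (duhamel_term F X)"
  unfolding duhamel_term_def continuous_on_eq_continuous_within
  using tent_integral_has_vector_derivative[OF assms] has_vector_derivative_continuous by blast

lemma norm_duhamel_term_le:
  fixes F :: "'a::banach \<Rightarrow> 'a"
  assumes "0 \<le> s" "continuous_on {0..s} (\<lambda>r. F (X r))" "\<And>x. norm (F x) \<le> M"
  shows "norm (duhamel_term F X s) \<le> M * s\<^sup>2 / 2"
  unfolding duhamel_term_def using norm_integral_tent_le[OF assms(1,2)] assms(3) by blast

lemma norm_duhamel_term_diff_le:
  fixes F :: "'a::banach \<Rightarrow> 'a"
  assumes "C-lipschitz_on UNIV F" "0 \<le> s" "continuous_on {0..s} X" "continuous_on {0..s} Y"
    and "\<And>r. r \<in> {0..s} \<Longrightarrow> norm (X r - Y r) \<le> d"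
  shows "norm (duhamel_term F X s - duhamel_term F Y s) \<le> C * d * s\<^sup>2 / 2"
proof -
  have cont: "continuous_on {0..s} (\<lambda>r. F (X r))" "continuous_on {0..s} (\<lambda>r. F (Y r))"
    using continuous_on_compose2[OF lipschitz_on_continuous_on[OF assms(1)]] assms(3,4) by auto
  have "duhamel_term F X s - duhamel_term F Y s
          = integral {0..s} (\<lambda>r. (s - r) *\<^sub>R (F (X r) - F (Y r)))"
    unfolding duhamel_term_def scaleR_diff_right
    by (subst integral_diff) (auto intro!: integrable_continuous_real continuous_intros cont)
  also have "norm \<dots> \<le> C * d * s\<^sup>2 / 2"
  proof (rule norm_integral_tent_le[OF assms(2)])
    show "continuous_on {0..s} (\<lambda>r. F (X r) - F (Y r))"
      by (intro continuous_intros cont)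
    fix r assume "r \<in> {0..s}"
    have "norm (F (X r) - F (Y r)) \<le> C * norm (X r - Y r)"
      using lipschitz_on_normD[OF assms(1)] by blast
    also have "\<dots> \<le> C * d"
      using assms(5)[OF \<open>r \<in> {0..s}\<close>] lipschitz_on_nonneg[OF assms(1)] by (rule mult_left_mono)
    finally show "norm (F (X r) - F (Y r)) \<le> C * d" .
  qed
  finally show ?thesis .
qed

text \<open>
  The unknown is extended to all of \<open>\<real>\<close> by clamping its argument to \<open>[0, t]\<close>, so that the
  Banach fixed point theorem applies in the complete space of bounded continuous functions.
\<close>
lemma integral_equation_boundary_solvable:
  fixes F :: "'a::banach \<Rightarrow> 'a"
  assumes lip: "C-lipschitz_on UNIV F" and "0 < t" "C * t\<^sup>2 < 1"
  obtains X v where "continuous_on {0..t} X" "X t = x1"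
    "\<And>s. s \<in> {0..t} \<Longrightarrow> X s = x0 + s *\<^sub>R v - duhamel_term F X s"
proof -
  define S where "S X s = x0 + (s / t) *\<^sub>R (x1 - x0 + duhamel_term F X t) - duhamel_term F X s"
    for X :: "real \<Rightarrow> 'a" and s
  have F_cont: "continuous_on A (\<lambda>r. F (X r))" if "continuous_on A X" for A X
    using continuous_on_compose2[OF lipschitz_on_continuous_on[OF lip] that] by simp
  have S_cont: "continuous_on {0..t} (S (apply_bcontfun X))" for X
    unfolding S_def using \<open>0 < t\<close>
    by (intro continuous_intros continuous_on_duhamel_term F_cont) auto
  define T where "T X = Bcontfun (ext_cont (S (apply_bcontfun X)) 0 t)" for X
  have T_apply: "apply_bcontfun (T X) s = S X (clamp 0 t s)" for X s
  proof -
    have "ext_cont (S (apply_bcontfun X)) 0 t \<in> bcontfun"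
      using S_cont[of X]
      by (auto intro!: continuous_on_ext_cont simp: bcontfun_def)
         (auto simp: ext_cont_def intro!: clamp_bounded compact_imp_bounded[OF compact_continuous_image])
    then show ?thesis by (simp add: T_def Bcontfun_inverse ext_cont_def)
  qed
  have "dist (T X) (T Y) \<le> (C * t\<^sup>2) * dist X Y" for X Y
  proof (rule dist_bound)
    fix s0
    define s where "s = clamp 0 t s0"
    have s: "s \<in> {0..t}" using clamp_in_interval[of 0 t s0] \<open>0 < t\<close> by (simp add: s_def)
    have diff_le: "norm (duhamel_term F X r - duhamel_term F Y r) \<le> C * dist X Y * t\<^sup>2 / 2"
      if "r \<in> {0..t}" for r
    proof -
      have "norm (duhamel_term F X r - duhamel_term F Y r) \<le> C * dist X Y * r\<^sup>2 / 2"
        using that by (intro norm_duhamel_term_diff_le[OF lip])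
                      (auto simp: dist_norm[symmetric] dist_bounded)
      also have "\<dots> \<le> C * dist X Y * t\<^sup>2 / 2"
        using that lipschitz_on_nonneg[OF lip] by (auto intro!: divide_right_mono mult_left_mono power_mono)
      finally show ?thesis .
    qed
    have "S X s - S Y s = (s / t) *\<^sub>R (duhamel_term F X t - duhamel_term F Y t)
                          - (duhamel_term F X s - duhamel_term F Y s)"
      by (simp add: S_def algebra_simps)
    then have "norm (S X s - S Y s) \<le> (s / t) * norm (duhamel_term F X t - duhamel_term F Y t)
                                      + norm (duhamel_term F X s - duhamel_term F Y s)"
      using s by (auto intro: order_trans[OF norm_triangle_ineq4])
    also have "\<dots> \<le> 1 * (C * dist X Y * t\<^sup>2 / 2) + C * dist X Y * t\<^sup>2 / 2"
      using s \<open>0 < t\<close> diff_le by (intro add_mono mult_mono) auto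
    finally show "dist (T X s0) (T Y s0) \<le> (C * t\<^sup>2) * dist X Y"
      by (simp add: T_apply s_def dist_norm algebra_simps)
  qed
  moreover have "0 \<le> C * t\<^sup>2" using lipschitz_on_nonneg[OF lip] by simp
  ultimately obtain X where "T X = X"
    using banach_fix_type[of "C * t\<^sup>2" T] \<open>C * t\<^sup>2 < 1\<close> by blast
  then have X: "X s = S X s" if "s \<in> {0..t}" for s
    using T_apply[of X s] that by simp
  show ?thesis
  proof
    show "continuous_on {0..t} (apply_bcontfun X)" by simp
    show "X t = x1" using X[of t] \<open>0 < t\<close> by (simp add: S_def)
    show "X s = x0 + s *\<^sub>R ((1 / t) *\<^sub>R (x1 - x0 + duhamel_term F X t)) - duhamel_term F X s"
      if "s \<in> {0..t}" for s
      using X[OF that] by (simp add: S_def)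
  qed
qed

lemma norm_boundary_interpolation_le:
  fixes D X :: "real \<Rightarrow> 'a::real_normed_vector"
  assumes eq: "\<And>s. s \<in> {0..t} \<Longrightarrow> X s = x0 + s *\<^sub>R v - D s" and "X t = x1" "0 < t"
    and D_le: "\<And>s. s \<in> {0..t} \<Longrightarrow> norm (D s) \<le> B" and s: "s \<in> {0..t}"
  shows "norm (X s) \<le> max (norm x0) (norm x1) + 2 * B"
proof -
  define \<theta> where "\<theta> = s / t"
  have \<theta>: "0 \<le> \<theta>" "\<theta> \<le> 1" using s \<open>0 < t\<close> by (auto simp: \<theta>_def)
  have "t *\<^sub>R v = x1 - x0 + D t"
    using eq[of t] \<open>X t = x1\<close> \<open>0 < t\<close> by (simp add: algebra_simps)
  moreover have "s *\<^sub>R v = \<theta> *\<^sub>R (t *\<^sub>R v)"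
    using \<open>0 < t\<close> by (simp add: \<theta>_def)
  ultimately have "X s = x0 + \<theta> *\<^sub>R (x1 - x0 + D t) - D s"
    using eq[OF s] by simp
  also have "\<dots> = ((1 - \<theta>) *\<^sub>R x0 + \<theta> *\<^sub>R x1) + \<theta> *\<^sub>R D t - D s"
    by (simp add: algebra_simps)
  also have "norm \<dots> \<le> ((1 - \<theta>) * norm x0 + \<theta> * norm x1) + \<theta> * B + B"
    using \<theta> D_le[OF s] D_le[of t] \<open>0 < t\<close>
    by (intro order_trans[OF norm_triangle_ineq4] add_mono order_trans[OF norm_triangle_ineq])
       (auto intro: mult_left_mono)
  also have "\<dots> \<le> ((1 - \<theta>) * max (norm x0) (norm x1) + \<theta> * max (norm x0) (norm x1)) + 1 * B + B"
    using \<theta> D_le[OF s] by (intro add_mono mult_left_mono mult_right_mono) (auto intro: order_trans[OF norm_ge_zero])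
  finally show ?thesis by (simp add: algebra_simps)
qed

lemma integral_equation_boundary_solution_bounded:
  fixes F :: "'a::banach \<Rightarrow> 'a"
  assumes lip: "C-lipschitz_on UNIV F" and F_le: "\<And>x. norm (F x) \<le> M" and "0 < t" "C * t\<^sup>2 < 1"
  obtains X v where "continuous_on {0..t} X" "X t = x1"
    "\<And>s. s \<in> {0..t} \<Longrightarrow> X s = x0 + s *\<^sub>R v - duhamel_term F X s"
    "\<And>s. s \<in> {0..t} \<Longrightarrow> norm (X s) \<le> max (norm x0) (norm x1) + M * t\<^sup>2"
    "norm (t *\<^sub>R v) \<le> norm x0 + norm x1 + M * t\<^sup>2 / 2"
proof -
  obtain X v where X_cont: "continuous_on {0..t} X" and "X t = x1"
    and eq: "\<And>s. s \<in> {0..t} \<Longrightarrow> X s = x0 + s *\<^sub>R v - duhamel_term F X s"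
    using integral_equation_boundary_solvable[OF lip \<open>0 < t\<close> \<open>C * t\<^sup>2 < 1\<close>, of x1 x0] by blast
  have F_X_cont: "continuous_on {0..t} (\<lambda>s. F (X s))"
    using continuous_on_compose2[OF lipschitz_on_continuous_on[OF lip] X_cont] by simp
  have D_le: "norm (duhamel_term F X s) \<le> M * t\<^sup>2 / 2" if "s \<in> {0..t}" for s
  proof -
    have "norm (duhamel_term F X s) \<le> M * s\<^sup>2 / 2"
      using that F_le by (intro norm_duhamel_term_le continuous_on_subset[OF F_X_cont]) auto
    also have "\<dots> \<le> M * t\<^sup>2 / 2"
      using that order_trans[OF norm_ge_zero F_le]
      by (auto intro!: divide_right_mono mult_left_mono power_mono)
    finally show ?thesis .
  qed
  have "t *\<^sub>R v = x1 - x0 + duhamel_term F X t"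
    using eq[of t] \<open>X t = x1\<close> \<open>0 < t\<close> by (simp add: algebra_simps)
  then have v_le: "norm (t *\<^sub>R v) \<le> norm x0 + norm x1 + M * t\<^sup>2 / 2"
    using norm_triangle_ineq[of "x1 - x0" "duhamel_term F X t"] norm_triangle_ineq4[of x1 x0]
      D_le[of t] \<open>0 < t\<close> by simp
  have X_le: "norm (X s) \<le> max (norm x0) (norm x1) + M * t\<^sup>2" if "s \<in> {0..t}" for s
    using norm_boundary_interpolation_le[OF eq \<open>X t = x1\<close> \<open>0 < t\<close> D_le that] by simp
  show ?thesis by (rule that[OF X_cont \<open>X t = x1\<close> eq X_le v_le])
qed

lemma norm_le_SUP_norm_on_compact:
  assumes "compact K" "continuous_on K f" "x \<in> K"
  shows "norm (f x) \<le> (SUP y\<in>K. norm (f y))"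
  by (intro cSUP_upper assms bounded_imp_bdd_above compact_imp_bounded compact_continuous_image
      continuous_on_norm)

lemma lipschitz_on_comp_closest_point:
  fixes S :: "'a::euclidean_space set"
  assumes "C-lipschitz_on S f" "convex S" "closed S" "S \<noteq> {}"
  shows "C-lipschitz_on UNIV (f \<circ> closest_point S)"
proof -
  have "1-lipschitz_on UNIV (closest_point S)"
    using closest_point_lipschitz[OF assms(2-4)] by (intro lipschitz_onI) auto
  moreover have "C-lipschitz_on (range (closest_point S)) f"
    using lipschitz_on_subset[OF assms(1)] closest_point_in_set[OF assms(3,4)] by blast
  ultimately show ?thesis using lipschitz_on_compose by fastforce
qed

lemma truncated_gradient_lipschitz_bounded:
  fixes grad :: "'a::euclidean_space \<Rightarrow> 'a"
  assumes "C2_with Phi grad hess" "0 \<le> \<rho>"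
  shows "(SUP x\<in>cball 0 \<rho>. norm (hess x))-lipschitz_on UNIV (grad \<circ> closest_point (cball 0 \<rho>))"
    and "norm ((grad \<circ> closest_point (cball 0 \<rho>)) y) \<le> (SUP x\<in>cball 0 \<rho>. norm (grad x))"
proof -
  define K where "K = cball (0::'a) \<rho>"
  have K: "compact K" "convex K" "closed K" "0 \<in> K" using assms(2) by (auto simp: K_def)
  have grad_deriv: "(grad has_derivative blinfun_apply (hess x)) (at x)" for x
    using assms(1) by (simp add: C2_with_def)
  have hess_cont: "continuous_on K hess"
    using assms(1) continuous_on_subset by (auto simp: C2_with_def)
  have grad_cont: "continuous_on K grad"
    by (intro continuous_at_imp_continuous_on ballI has_derivative_continuous[OF grad_deriv])
  have hess_le: "norm (hess x) \<le> (SUP x\<in>K. norm (hess x))" if "x \<in> K" for x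
    by (rule norm_le_SUP_norm_on_compact[OF K(1) hess_cont that])
  have "(SUP x\<in>K. norm (hess x))-lipschitz_on K grad"
    by (rule bounded_derivative_imp_lipschitz[OF has_derivative_at_withinI[OF grad_deriv] K(2)])
       (use hess_le[OF K(4)] in
         \<open>auto simp: norm_blinfun.rep_eq[symmetric] intro: hess_le order_trans[OF norm_ge_zero]\<close>)
  then show "(SUP x\<in>cball 0 \<rho>. norm (hess x))-lipschitz_on UNIV (grad \<circ> closest_point (cball 0 \<rho>))"
    unfolding K_def using K by (intro lipschitz_on_comp_closest_point) (auto simp: K_def)
  show "norm ((grad \<circ> closest_point (cball 0 \<rho>)) y) \<le> (SUP x\<in>cball 0 \<rho>. norm (grad x))"
    using norm_le_SUP_norm_on_compact[OF K(1) grad_cont closest_point_in_set[OF K(3)]] K(4)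
    by (auto simp: K_def)
qed

lemma mult_square_le_of_mult_exp_le:
  fixes C t t1 :: real
  assumes "0 \<le> C" "0 \<le> t" "t \<le> t1" "C * t1\<^sup>2 * exp (C * t1\<^sup>2) \<le> c"
  shows "C * t\<^sup>2 \<le> c"
proof -
  have "C * t\<^sup>2 \<le> C * t1\<^sup>2"
    using assms(1-3) by (intro mult_left_mono power_mono) auto
  also have "\<dots> \<le> C * t1\<^sup>2 * exp (C * t1\<^sup>2)"
    using assms(1) by (intro mult_le_cancel_left1[THEN iffD2]) auto
  finally show ?thesis using assms(4) by linarith
qed

lemma mult_square_le_of_le_sqrt_div:
  fixes M R t t1 :: real
  assumes "0 \<le> t" "t \<le> t1" "0 \<le> M" "0 \<le> R" "M \<noteq> 0 \<Longrightarrow> t1 \<le> 2 * sqrt R / sqrt M"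
  shows "M * t\<^sup>2 \<le> 4 * R"
proof (cases "M = 0")
  case False
  then have "t\<^sup>2 \<le> (2 * sqrt R / sqrt M)\<^sup>2"
    using assms by (intro power_mono) auto
  also have "\<dots> = 4 * R / M"
    using assms(3,4) by (simp add: power_divide power_mult_distrib)
  finally show ?thesis using False assms(3) by (simp add: field_simps)
qed (use assms in simp)

theorem mainTheorem8:
  fixes Phi :: "'a::euclidean_space \<Rightarrow> real" and grad :: "'a \<Rightarrow> 'a"
    and hess :: "'a \<Rightarrow> 'a \<Rightarrow>\<^sub>L 'a" and x0 x1 :: 'a and R C t1 :: real
    and Crho :: "real \<Rightarrow> real"
  assumes "C2_with Phi grad hess"
    and "R = max (norm x0) (norm x1)" and "R > 0"
    and "C = (SUP x\<in>cball 0 (9*R). norm (hess x))"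
    and "\<And>\<rho>. Crho \<rho> = (SUP x\<in>cball 0 \<rho>. norm (grad x))"
    and "t1 > 0"
    and "C * t1^2 * exp (C * t1^2) \<le> 1/4"
    and "Crho (2*R) \<noteq> 0 \<Longrightarrow> t1 \<le> sqrt R / sqrt (2 * Crho (2*R))"
    and "Crho (9*R) \<noteq> 0 \<Longrightarrow> t1 \<le> 2 * sqrt R / sqrt (Crho (9*R))"
  shows "\<forall>t. 0 < t \<and> t \<le> t1 \<longrightarrow>
           (\<exists>v0 X V. norm v0 \<le> 4*R \<and> newton_solution grad t x0 (v0 /\<^sub>R t) X V \<and> X t = x1)"
proof (intro allI impI, elim conjE)
  fix t :: real assume "0 < t" "t \<le> t1"
  define F where "F = grad \<circ> closest_point (cball 0 (9 * R))"
  have F_lip: "C-lipschitz_on UNIV F" and F_le: "\<And>x. norm (F x) \<le> Crho (9 * R)"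
    using truncated_gradient_lipschitz_bounded[OF assms(1), of "9 * R"] \<open>R > 0\<close>
    unfolding F_def assms(4,5) by auto
  have "0 \<le> C" "0 \<le> Crho (9 * R)"
    using lipschitz_on_nonneg[OF F_lip] order_trans[OF norm_ge_zero F_le] by auto
  have "C * t\<^sup>2 < 1"
    using mult_square_le_of_mult_exp_le[OF \<open>0 \<le> C\<close> _ \<open>t \<le> t1\<close> assms(7)] \<open>0 < t\<close> by simp
  have "Crho (9 * R) * t\<^sup>2 \<le> 4 * R"
    using mult_square_le_of_le_sqrt_div[OF _ \<open>t \<le> t1\<close> \<open>0 \<le> Crho (9 * R)\<close> _ assms(9)]
      \<open>0 < t\<close> \<open>R > 0\<close> by simp
  obtain X v where X_cont: "continuous_on {0..t} X" and "X t = x1"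
    and eq: "\<And>s. s \<in> {0..t} \<Longrightarrow> X s = x0 + s *\<^sub>R v - duhamel_term F X s"
    and X_le: "\<And>s. s \<in> {0..t} \<Longrightarrow> norm (X s) \<le> R + Crho (9 * R) * t\<^sup>2"
    and v_le: "norm (t *\<^sub>R v) \<le> norm x0 + norm x1 + Crho (9 * R) * t\<^sup>2 / 2"
    using integral_equation_boundary_solution_bounded[OF F_lip F_le \<open>0 < t\<close> \<open>C * t\<^sup>2 < 1\<close>, of x1 x0]
    unfolding assms(2) by blast
  have "F (X s) = grad (X s)" if "s \<in> {0..t}" for s
    using closest_point_self[of "X s"] X_le[OF that] \<open>Crho (9 * R) * t\<^sup>2 \<le> 4 * R\<close> \<open>R > 0\<close>
    by (simp add: F_def)
  moreover have "newton_solution F t x0 v X (\<lambda>s. v - integral {0..s} (\<lambda>r. F (X r)))"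
    using newton_solution_of_integral_equation[OF _ _ eq] \<open>0 < t\<close>
      continuous_on_compose2[OF lipschitz_on_continuous_on[OF F_lip] X_cont] by simp
  ultimately have "newton_solution grad t x0 ((t *\<^sub>R v) /\<^sub>R t) X (\<lambda>s. v - integral {0..s} (\<lambda>r. F (X r)))"
    using newton_solution_cong[of t F X grad] \<open>0 < t\<close> by simp
  moreover have "norm (t *\<^sub>R v) \<le> 4 * R"
    using v_le \<open>Crho (9 * R) * t\<^sup>2 \<le> 4 * R\<close> assms(2) by simp
  ultimately show "\<exists>v0 X V. norm v0 \<le> 4*R \<and> newton_solution grad t x0 (v0 /\<^sub>R t) X V \<and> X t = x1"
    using \<open>X t = x1\<close> by blast
qed

end
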